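(* There is no binary self-orthogonal $[118,7,58]$ code.
   Context: A binary linear code $C$ is self-orthogonal if $C\subseteq C^\perp$. *)

theory Defs
  imports Main
begin

text \<open>Binary words of length n are represented as bool lists of length n
  (True = 1, False = 0); addition in GF(2)^n is componentwise xor.\<close>

definition vadd :: "bool list \<Rightarrow> bool list \<Rightarrow> bool list" where
  "vadd x y = map2 (\<noteq>) x y"

definition hamming_dist :: "bool list \<Rightarrow> bool list \<Rightarrow> nat" where
  "hamming_dist x y = length (filter id (map2 (\<noteq>) x y))"

definition orth :: "bool list \<Rightarrow> bool list \<Rightarrow> bool" where
  "orth x y \<longleftrightarrow> even (length (filter id (map2 (\<and>) x y)))"

text \<open>A binary linear code of length n: a subspace of GF(2)^n
  (over GF(2): contains 0 and is closed under addition).\<close>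
definition binary_linear_code :: "nat \<Rightarrow> bool list set \<Rightarrow> bool" where
  "binary_linear_code n C \<longleftrightarrow>
     C \<subseteq> {x. length x = n} \<and> replicate n False \<in> C \<and> (\<forall>x\<in>C. \<forall>y\<in>C. vadd x y \<in> C)"

definition code_dim :: "bool list set \<Rightarrow> nat \<Rightarrow> bool" where
  "code_dim C k \<longleftrightarrow> card C = 2 ^ k"

definition min_distance :: "bool list set \<Rightarrow> nat" where
  "min_distance C = Min {hamming_dist x y | x y. x \<in> C \<and> y \<in> C \<and> x \<noteq> y}"

definition dual_code :: "nat \<Rightarrow> bool list set \<Rightarrow> bool list set" where
  "dual_code n C = {y. length y = n \<and> (\<forall>x\<in>C. orth x y)}"

definition self_orthogonal :: "nat \<Rightarrow> bool list set \<Rightarrow> bool" where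
  "self_orthogonal n C \<longleftrightarrow> C \<subseteq> dual_code n C"

definition is_nkd_code :: "nat \<Rightarrow> nat \<Rightarrow> nat \<Rightarrow> bool list set \<Rightarrow> bool" where
  "is_nkd_code n k d C \<longleftrightarrow> binary_linear_code n C \<and> code_dim C k \<and> min_distance C = d"

end

theory Submission
  imports Defs
begin

text \<open>Self-orthogonality makes every weight even and weight additive modulo 4, so the
  words of weight divisible by 4 form a subcode D of index at most 2. Since the minimum
  distance 58 is 2 modulo 4, every nonzero word of D has weight at least 60. Averaging
  over coordinates, each coordinate is 1 in at most half the words of D, so
  60 (|D| - 1) \<le> 59 |D|, i.e. |D| \<le> 60, contradicting |D| \<ge> 128 / 2.\<close>

definition weight :: "bool list \<Rightarrow> nat" where
  "weight x = length (filter id x)"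

lemma weight_replicate_False [simp]: "weight (replicate n False) = 0"
  unfolding weight_def by simp

lemma nth_vadd: "i < length x \<Longrightarrow> i < length y \<Longrightarrow> vadd x y ! i = (x ! i \<noteq> y ! i)"
  unfolding vadd_def by simp

lemma vadd_vadd_cancel: "length x = length y \<Longrightarrow> vadd x (vadd x y) = y"
  unfolding vadd_def by (induction x y rule: list_induct2) auto

lemma weight_vadd:
  "length x = length y \<Longrightarrow>
   weight (vadd x y) + 2 * length (filter id (map2 (\<and>) x y)) = weight x + weight y"
  unfolding weight_def vadd_def by (induction x y rule: list_induct2) auto

lemma weight_vadd_mod_4:
  assumes "length x = length y" and "orth x y"
  shows "weight (vadd x y) mod 4 = (weight x + weight y) mod 4"
proof -
  obtain m where "length (filter id (map2 (\<and>) x y)) = 2 * m"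
    using \<open>orth x y\<close> unfolding orth_def by blast
  then have "weight x + weight y = weight (vadd x y) + 4 * m"
    using weight_vadd[OF assms(1)] by simp
  then show ?thesis by simp
qed

lemma orth_self_iff_even_weight: "orth x x \<longleftrightarrow> even (weight x)"
proof -
  have "map2 (\<and>) x x = x" by (induction x) auto
  then show ?thesis unfolding orth_def weight_def by simp
qed

lemma weight_eq_sum_coordinates:
  "length x = n \<Longrightarrow> weight x = (\<Sum>i<n. of_bool (x ! i))"
  unfolding weight_def by (simp add: length_filter_conv_card lessThan_def Collect_conj_eq)

lemma hamming_dist_replicate_False: "hamming_dist x (replicate (length x) False) = weight x"
proof -
  have "map2 (\<noteq>) x (replicate (length x) False) = x" by (induction x) auto
  then show ?thesis unfolding hamming_dist_def weight_def by simp
qed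

lemma min_distance_le_weight:
  assumes "finite C" and "replicate (length x) False \<in> C" and "x \<in> C"
    and "x \<noteq> replicate (length x) False"
  shows "min_distance C \<le> weight x"
proof -
  let ?S = "{hamming_dist x y | x y. x \<in> C \<and> y \<in> C \<and> x \<noteq> y}"
  have "?S \<subseteq> (\<lambda>(x, y). hamming_dist x y) ` (C \<times> C)" by auto
  then have "finite ?S" by (rule finite_subset) (use \<open>finite C\<close> in simp)
  moreover have "hamming_dist x (replicate (length x) False) \<in> ?S" using assms by blast
  ultimately show ?thesis unfolding min_distance_def hamming_dist_replicate_False by simp
qed

lemma card_le_card_if_vadd_maps_into:
  assumes "finite B" and "A \<subseteq> {x. length x = length x0}" and "vadd x0 ` A \<subseteq> B"
  shows "card A \<le> card B"
proof (rule card_inj_on_le[OF _ assms(3,1)])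
  show "inj_on (vadd x0) A"
  proof (rule inj_onI)
    fix a b assume "a \<in> A" "b \<in> A" "vadd x0 a = vadd x0 b"
    then have "vadd x0 (vadd x0 a) = vadd x0 (vadd x0 b)" and "length x0 = length a"
      and "length x0 = length b" using assms(2) by auto
    then show "a = b" by (simp add: vadd_vadd_cancel)
  qed
qed

lemma card_le_double_card_if_vadd_Diff:
  assumes "finite C" and "C \<subseteq> {x. length x = n}" and "D \<subseteq> C"
    and "\<And>x y. x \<in> C - D \<Longrightarrow> y \<in> C - D \<Longrightarrow> vadd x y \<in> D"
  shows "card C \<le> 2 * card D"
proof (cases "C - D = {}")
  case True
  then have "C = D" using \<open>D \<subseteq> C\<close> by blast
  then show ?thesis by simp
next
  case False
  then obtain x0 where x0: "x0 \<in> C - D" by blast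
  have finD: "finite D" using assms(1,3) by (rule finite_subset[rotated])
  have "card (C - D) \<le> card D"
  proof (rule card_le_card_if_vadd_maps_into[OF finD])
    show "C - D \<subseteq> {x. length x = length x0}" using assms(2) x0 by auto
    show "vadd x0 ` (C - D) \<subseteq> D" using assms(4) x0 by blast
  qed
  moreover have "card (C - D) = card C - card D" using finD assms(3) by (rule card_Diff_subset)
  moreover have "card D \<le> card C" using assms(1,3) by (rule card_mono)
  ultimately show ?thesis by linarith
qed

lemma card_coordinate_one_le_half:
  assumes "finite C" and "C \<subseteq> {x. length x = n}" and "\<forall>x\<in>C. \<forall>y\<in>C. vadd x y \<in> C"
    and "i < n"
  shows "2 * card {x\<in>C. x ! i} \<le> card C"
proof -
  let ?A = "{x\<in>C. x ! i}" and ?B = "{x\<in>C. \<not> x ! i}"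
  have "card C \<le> 2 * card ?B"
  proof (rule card_le_double_card_if_vadd_Diff[OF assms(1,2)])
    fix x y assume "x \<in> C - ?B" "y \<in> C - ?B"
    then have "x \<in> C" "y \<in> C" "x ! i" "y ! i" "length x = n" "length y = n"
      using assms(2) by auto
    then show "vadd x y \<in> ?B" using assms(3,4) by (simp add: nth_vadd)
  qed auto
  moreover have "card C = card ?A + card ?B"
    using assms(1) by (subst card_Un_disjoint[symmetric]) (auto intro: arg_cong[where f = card])
  ultimately show ?thesis by simp
qed

text \<open>Double counting of the pairs (word, coordinate where it is 1).\<close>

lemma sum_weight_le_half:
  assumes "finite C" and "C \<subseteq> {x. length x = n}" and "\<forall>x\<in>C. \<forall>y\<in>C. vadd x y \<in> C"
  shows "2 * (\<Sum>x\<in>C. weight x) \<le> n * card C"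
proof -
  have "(\<Sum>x\<in>C. weight x) = (\<Sum>x\<in>C. \<Sum>i<n. of_bool (x ! i))"
    using assms(2) by (intro sum.cong) (auto simp: weight_eq_sum_coordinates)
  also have "\<dots> = (\<Sum>i<n. card {x\<in>C. x ! i})"
    using assms(1) by (subst sum.swap) (simp add: Collect_conj_eq Int_commute)
  finally have "2 * (\<Sum>x\<in>C. weight x) = (\<Sum>i<n. 2 * card {x\<in>C. x ! i})"
    by (simp add: sum_distrib_left)
  also have "\<dots> \<le> (\<Sum>i<n. card C)"
    using card_coordinate_one_le_half[OF assms] by (intro sum_mono) simp
  finally show ?thesis by simp
qed

definition doubly_even_subcode :: "bool list set \<Rightarrow> bool list set" where
  "doubly_even_subcode C = {x\<in>C. weight x mod 4 = 0}"

locale self_orthogonal_code =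
  fixes n :: nat and C :: "bool list set"
  assumes linear: "binary_linear_code n C" and self_orth: "self_orthogonal n C"
begin

abbreviation "D \<equiv> doubly_even_subcode C"

lemma length_mem: "x \<in> C \<Longrightarrow> length x = n"
  using linear unfolding binary_linear_code_def by blast

lemma zero_mem: "replicate n False \<in> C"
  using linear unfolding binary_linear_code_def by blast

lemma vadd_mem: "x \<in> C \<Longrightarrow> y \<in> C \<Longrightarrow> vadd x y \<in> C"
  using linear unfolding binary_linear_code_def by blast

lemma orth_mem: "x \<in> C \<Longrightarrow> y \<in> C \<Longrightarrow> orth x y"
  using self_orth unfolding self_orthogonal_def dual_code_def by blast

lemma finite_code: "finite C"
proof -
  have "finite {x :: bool list. set x \<subseteq> UNIV \<and> length x = n}"
    by (rule finite_lists_length_eq) simp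
  then show ?thesis by (rule finite_subset[rotated]) (use length_mem in blast)
qed

lemma weight_mod_4_cases:
  assumes "x \<in> C"
  shows "weight x mod 4 = 0 \<or> weight x mod 4 = 2"
proof -
  have "even (weight x)" using orth_mem[OF assms assms] by (simp add: orth_self_iff_even_weight)
  then show ?thesis by presburger
qed

lemma weight_vadd_mem_mod_4:
  "x \<in> C \<Longrightarrow> y \<in> C \<Longrightarrow> weight (vadd x y) mod 4 = (weight x + weight y) mod 4"
  by (simp add: weight_vadd_mod_4 length_mem orth_mem)

lemma doubly_even_vadd_closed: "\<forall>x\<in>D. \<forall>y\<in>D. vadd x y \<in> D"
  unfolding doubly_even_subcode_def using weight_vadd_mem_mod_4 vadd_mem by auto

lemma card_le_double_card_doubly_even: "card C \<le> 2 * card D"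
proof (rule card_le_double_card_if_vadd_Diff[OF finite_code])
  show "C \<subseteq> {x. length x = n}" using length_mem by blast
  show "D \<subseteq> C" unfolding doubly_even_subcode_def by blast
  fix x y assume "x \<in> C - D" "y \<in> C - D"
  then have "x \<in> C" "y \<in> C" and "weight x mod 4 = 2" "weight y mod 4 = 2"
    using weight_mod_4_cases unfolding doubly_even_subcode_def by fastforce+
  then have "(weight x + weight y) mod 4 = 0" by presburger
  then show "vadd x y \<in> D" unfolding doubly_even_subcode_def
    using \<open>x \<in> C\<close> \<open>y \<in> C\<close> by (simp add: vadd_mem weight_vadd_mem_mod_4)
qed

lemma doubly_even_weight_ge:
  assumes "min_distance C mod 4 = 2" and "x \<in> D" and "x \<noteq> replicate n False"
  shows "min_distance C + 2 \<le> weight x"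
proof -
  have "x \<in> C" and "weight x mod 4 = 0" using \<open>x \<in> D\<close> unfolding doubly_even_subcode_def by auto
  then have "min_distance C \<le> weight x"
    using min_distance_le_weight[OF finite_code] zero_mem length_mem assms(3) by simp
  with \<open>weight x mod 4 = 0\<close> assms(1) show ?thesis by presburger
qed

lemma plotkin_bound_doubly_even:
  assumes "min_distance C mod 4 = 2"
  shows "2 * (min_distance C + 2) * (card D - 1) \<le> n * card D"
proof -
  have finD: "finite D" and zero: "replicate n False \<in> D"
    using finite_code zero_mem unfolding doubly_even_subcode_def by auto
  have "(min_distance C + 2) * (card D - 1) = (\<Sum>x\<in>D - {replicate n False}. min_distance C + 2)"
    using finD zero by simp
  also have "\<dots> \<le> (\<Sum>x\<in>D - {replicate n False}. weight x)"
    using doubly_even_weight_ge[OF assms] by (intro sum_mono) blast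
  also have "\<dots> \<le> (\<Sum>x\<in>D. weight x)"
    using finD by (intro sum_mono2) auto
  finally have "2 * (min_distance C + 2) * (card D - 1) \<le> 2 * (\<Sum>x\<in>D. weight x)"
    by simp
  also have "\<dots> \<le> n * card D"
  proof (rule sum_weight_le_half[OF finD _ doubly_even_vadd_closed])
    show "D \<subseteq> {x. length x = n}" using length_mem unfolding doubly_even_subcode_def by blast
  qed
  finally show ?thesis .
qed

theorem plotkin_bound:
  assumes "min_distance C mod 4 = 2"
  shows "card C * (2 * (min_distance C + 2) - n) \<le> 4 * (min_distance C + 2)"
proof -
  define a where "a = 2 * (min_distance C + 2)"
  have "card D \<noteq> 0"
    using finite_code zero_mem unfolding doubly_even_subcode_def by (auto simp: card_eq_0_iff)
  then have "a * card D \<le> n * card D + a"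
    using plotkin_bound_doubly_even[OF assms] unfolding a_def[symmetric] by (simp add: diff_mult_distrib2)
  then have "card D * (a - n) \<le> a"
    by (simp add: diff_mult_distrib2 mult.commute)
  moreover have "card C * (a - n) \<le> 2 * card D * (a - n)"
    using card_le_double_card_doubly_even by (rule mult_le_mono1)
  ultimately have "card C * (a - n) \<le> 2 * a" by linarith
  then show ?thesis unfolding a_def by simp
qed

end

theorem proposition6p4:
  "\<not> (\<exists>C. is_nkd_code 118 7 58 C \<and> self_orthogonal 118 C)"
proof
  assume "\<exists>C. is_nkd_code 118 7 58 C \<and> self_orthogonal 118 C"
  then obtain C where "binary_linear_code 118 C" and "self_orthogonal 118 C"
    and card: "card C = 2 ^ 7" and dist: "min_distance C = 58"
    unfolding is_nkd_code_def code_dim_def by blast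
  then interpret self_orthogonal_code 118 C by unfold_locales
  have "card C * 2 \<le> 240" using plotkin_bound dist by simp
  then show False using card by simp
qed

end
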